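(* Let $G=\mathbb Z$ with the discrete topology, $Y=(0,\infty)\subset\mathbb R$, and let $\theta$ be the partial action of $\mathbb Z$ on $Y$ with $Y_n=(\max\{0,n\},\infty)$ and $\theta_n\colon Y_{-n}\to Y_n$, $y\mapsto n+y$. Then the enveloping space $Y_G$ of $\theta$ is $G$-homeomorphic to $\mathbb R$ endowed with the global action $\mathbb Z\times\mathbb R\to\mathbb R$, $(n,t)\mapsto n+t$.
   Context: The enveloping space is $Y_G=(G\times Y)/R$ with the quotient topology, where $(n,y)R(m,z)$ iff $y\in Y_{m-n}$ and $\theta_{n-m}(y)=z$, with the global action $k\cdot[n,y]=[k+n,y]$. A $G$-homeomorphism is a homeomorphism $f$ with $f(k\cdot x)=k\cdot f(x)$ for all $k,x$. *)

theory Defs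
  imports "HOL-Analysis.Analysis"
begin

definition quotient_topology :: "'a topology \<Rightarrow> ('a \<Rightarrow> 'b) \<Rightarrow> 'b topology" where
  "quotient_topology X p =
     topology (\<lambda>U. U \<subseteq> p ` topspace X \<and> openin X {x \<in> topspace X. p x \<in> U})"

text \<open>General enveloping space of a partial action of Z: Y the space (with topology TY),
  Yd n the domain Y_n, th n the map theta_n : Y_(-n) -> Y_n.\<close>

definition env_rel :: "(int \<Rightarrow> 'y set) \<Rightarrow> (int \<Rightarrow> 'y \<Rightarrow> 'y) \<Rightarrow> ((int \<times> 'y) \<times> (int \<times> 'y)) set" where
  "env_rel Yd th = {((n, y), (m, z)). y \<in> Yd (m - n) \<and> th (n - m) y = z}"

definition env_class :: "(int \<Rightarrow> 'y set) \<Rightarrow> (int \<Rightarrow> 'y \<Rightarrow> 'y) \<Rightarrow> int \<times> 'y \<Rightarrow> (int \<times> 'y) set" where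
  "env_class Yd th p = env_rel Yd th `` {p}"

definition env_space :: "'y topology \<Rightarrow> (int \<Rightarrow> 'y set) \<Rightarrow> (int \<Rightarrow> 'y \<Rightarrow> 'y) \<Rightarrow> (int \<times> 'y) set topology" where
  "env_space TY Yd th = quotient_topology (prod_topology (discrete_topology UNIV) TY) (env_class Yd th)"

definition env_act :: "int \<Rightarrow> (int \<times> 'y) set \<Rightarrow> (int \<times> 'y) set" where
  "env_act k c = (\<lambda>(n, y). (k + n, y)) ` c"

definition Yex :: "real set" where "Yex = {0<..}"
definition Yex_dom :: "int \<Rightarrow> real set" where "Yex_dom n = {max 0 (real_of_int n)<..}"
definition thex :: "int \<Rightarrow> real \<Rightarrow> real" where "thex n y = real_of_int n + y"

end

theory Submission
  imports Defs
begin

text \<open>The class of (n, y) in the enveloping space is the set of all (m, n + y - m) with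
  m < n + y, so it is determined by n + y. Hence (n, y) \<mapsto> n + y, which is continuous,
  open and onto \<real>, induces a homeomorphism of the quotient with \<real>; it intertwines the
  global action because shifting n by k shifts n + y by k.\<close>

lemma istopology_quotient:
  "istopology (\<lambda>U. U \<subseteq> p ` topspace X \<and> openin X {x \<in> topspace X. p x \<in> U})"
  unfolding istopology_def
proof (rule conjI; intro allI impI)
  fix S T
  assume "S \<subseteq> p ` topspace X \<and> openin X {x \<in> topspace X. p x \<in> S}"
    and "T \<subseteq> p ` topspace X \<and> openin X {x \<in> topspace X. p x \<in> T}"
  moreover have "{x \<in> topspace X. p x \<in> S \<inter> T} =
      {x \<in> topspace X. p x \<in> S} \<inter> {x \<in> topspace X. p x \<in> T}"
    by auto
  ultimately show "S \<inter> T \<subseteq> p ` topspace X \<and> openin X {x \<in> topspace X. p x \<in> S \<inter> T}"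
    by auto
next
  fix K
  assume K: "\<forall>U\<in>K. U \<subseteq> p ` topspace X \<and> openin X {x \<in> topspace X. p x \<in> U}"
  have "{x \<in> topspace X. p x \<in> \<Union>K} = (\<Union>U\<in>K. {x \<in> topspace X. p x \<in> U})"
    by auto
  moreover have "openin X (\<Union>U\<in>K. {x \<in> topspace X. p x \<in> U})"
    using K by (intro openin_Union) auto
  ultimately show "\<Union>K \<subseteq> p ` topspace X \<and> openin X {x \<in> topspace X. p x \<in> \<Union>K}"
    using K by auto
qed

lemma openin_quotient_topology:
  "openin (quotient_topology X p) U \<longleftrightarrow>
     U \<subseteq> p ` topspace X \<and> openin X {x \<in> topspace X. p x \<in> U}"
  unfolding quotient_topology_def by (simp add: istopology_quotient)

lemma topspace_quotient_topology: "topspace (quotient_topology X p) = p ` topspace X"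
proof -
  have "{x \<in> topspace X. p x \<in> p ` topspace X} = topspace X"
    by auto
  then have "openin (quotient_topology X p) (p ` topspace X)"
    unfolding openin_quotient_topology by simp
  then show ?thesis
    unfolding topspace_def openin_quotient_topology by blast
qed

lemma homeomorphic_map_quotient_topologyE:
  assumes cont: "continuous_map X Z g" and open_g: "open_map X Z g"
    and onto: "g ` topspace X = topspace Z"
    and fibres: "\<And>x x'. \<lbrakk>x \<in> topspace X; x' \<in> topspace X\<rbrakk> \<Longrightarrow> p x = p x' \<longleftrightarrow> g x = g x'"
  obtains f where "homeomorphic_map (quotient_topology X p) Z f"
    and "\<And>x. x \<in> topspace X \<Longrightarrow> f (p x) = g x"
proof
  let ?Q = "quotient_topology X p"
  define f where "f c = g (SOME x. x \<in> topspace X \<and> p x = c)" for c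
  show f_p: "f (p x) = g x" if "x \<in> topspace X" for x
  proof -
    have "(SOME x'. x' \<in> topspace X \<and> p x' = p x) \<in> topspace X \<and>
        p (SOME x'. x' \<in> topspace X \<and> p x' = p x) = p x"
      by (rule someI[where x = x]) (simp add: that)
    then show ?thesis
      unfolding f_def using fibres that by blast
  qed
  have preimage: "{x \<in> topspace X. p x \<in> {c \<in> topspace ?Q. f c \<in> U}} = {x \<in> topspace X. g x \<in> U}"
    for U
    using fibres by (auto simp: topspace_quotient_topology f_p)
  show "homeomorphic_map ?Q Z f"
  proof (rule bijective_open_imp_homeomorphic_map)
    show "continuous_map ?Q Z f"
      unfolding continuous_map_def
    proof (intro conjI allI impI)
      show "f \<in> topspace ?Q \<rightarrow> topspace Z"
        using onto by (auto simp: topspace_quotient_topology f_p)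
      fix U assume "openin Z U"
      then show "openin ?Q {c \<in> topspace ?Q. f c \<in> U}"
        using cont unfolding openin_quotient_topology preimage continuous_map_def
        by (auto simp: topspace_quotient_topology)
    qed
    show "open_map ?Q Z f"
      unfolding open_map_def
    proof (intro allI impI)
      fix U assume "openin ?Q U"
      then have "U \<subseteq> p ` topspace X" and "openin X {x \<in> topspace X. p x \<in> U}"
        unfolding openin_quotient_topology by auto
      moreover have "f ` U = g ` {x \<in> topspace X. p x \<in> U}"
      proof -
        have "U = p ` {x \<in> topspace X. p x \<in> U}"
          using \<open>U \<subseteq> p ` topspace X\<close> by blast
        then have "f ` U = (\<lambda>x. f (p x)) ` {x \<in> topspace X. p x \<in> U}"
          by (metis image_image)
        then show ?thesis
          by (simp add: f_p)
      qed
      ultimately show "openin Z (f ` U)"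
        using open_g by (simp add: open_map_def)
    qed
    show "f ` topspace ?Q = topspace Z"
      using onto by (simp add: topspace_quotient_topology image_image f_p cong: image_cong)
    show "inj_on f (topspace ?Q)"
      by (auto simp: inj_on_def topspace_quotient_topology f_p fibres)
  qed
qed

lemma open_map_prod_discrete_topology:
  assumes "\<And>i. i \<in> I \<Longrightarrow> open_map Y Z (\<lambda>y. g (i, y))"
  shows "open_map (prod_topology (discrete_topology I) Y) Z g"
  unfolding open_map_def
proof (intro allI impI)
  fix W assume W: "openin (prod_topology (discrete_topology I) Y) W"
  define slice where "slice i = {y \<in> topspace Y. (i, y) \<in> W}" for i
  have "openin Y (slice i)" if "i \<in> I" for i
  proof -
    have "continuous_map Y (prod_topology (discrete_topology I) Y) (\<lambda>y. (i, y))"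
      using that by (intro continuous_map_pairedI) auto
    then show ?thesis
      using W unfolding slice_def continuous_map_def by blast
  qed
  then have "openin Z (\<Union>i\<in>I. (\<lambda>y. g (i, y)) ` slice i)"
    using assms by (auto simp: open_map_def)
  moreover have "g ` W = (\<Union>i\<in>I. (\<lambda>y. g (i, y)) ` slice i)"
    using openin_subset[OF W] by (force simp: slice_def)
  ultimately show "openin Z (g ` W)"
    by simp
qed

lemma mem_env_class: "(m, z) \<in> env_class Yd th (n, y) \<longleftrightarrow> y \<in> Yd (m - n) \<and> th (n - m) y = z"
  by (simp add: env_class_def env_rel_def)

lemma mem_env_act: "(m, z) \<in> env_act k c \<longleftrightarrow> (m - k, z) \<in> c"
  unfolding env_act_def by force

lemma env_act_env_class: "env_act k (env_class Yd th (n, y)) = env_class Yd th (k + n, y)"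
  by (auto simp: mem_env_act mem_env_class algebra_simps)

lemma topspace_env_space: "topspace (env_space TY Yd th) = env_class Yd th ` (UNIV \<times> topspace TY)"
  by (simp add: env_space_def topspace_quotient_topology)

lemma env_class_Yex:
  fixes y :: real
  assumes "y > 0"
  shows "env_class Yex_dom thex (n, y) =
    {(m, z). real_of_int m < real_of_int n + y \<and> z = real_of_int n + y - real_of_int m}"
  using assms unfolding env_class_def env_rel_def Yex_dom_def thex_def
  by (auto simp: max_def split: if_splits)

lemma env_class_Yex_eq_iff:
  fixes y y' :: real
  assumes "y > 0" and "y' > 0"
  shows "env_class Yex_dom thex (n, y) = env_class Yex_dom thex (n', y') \<longleftrightarrow>
    real_of_int n + y = real_of_int n' + y'"
proof
  assume eq: "env_class Yex_dom thex (n, y) = env_class Yex_dom thex (n', y')"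
  have "(n, y) \<in> env_class Yex_dom thex (n', y')"
    using assms(1) unfolding eq[symmetric] by (simp add: mem_env_class Yex_dom_def thex_def)
  then show "real_of_int n + y = real_of_int n' + y'"
    by (simp add: mem_env_class thex_def)
next
  assume "real_of_int n + y = real_of_int n' + y'"
  then show "env_class Yex_dom thex (n, y) = env_class Yex_dom thex (n', y')"
    unfolding env_class_Yex[OF assms(1)] env_class_Yex[OF assms(2)] by simp
qed

lemma continuous_map_of_int_add:
  "continuous_map (prod_topology (discrete_topology I) (subtopology euclideanreal S))
     euclideanreal (\<lambda>(n, y). real_of_int n + y)"
proof -
  have "continuous_map (prod_topology (discrete_topology I) (subtopology euclideanreal S))
      euclideanreal (\<lambda>x. real_of_int (fst x) + snd x)"
    by (intro continuous_map_add continuous_map_compose[OF continuous_map_fst, unfolded o_def]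
        continuous_map_compose[OF continuous_map_snd, unfolded o_def] continuous_map_from_subtopology)
      auto
  then show ?thesis
    by (simp add: case_prod_unfold)
qed

lemma open_map_translation_open_subtopology:
  fixes a :: "'a::real_normed_vector"
  assumes "open S"
  shows "open_map (top_of_set S) euclidean (\<lambda>y. a + y)"
  unfolding open_map_def
proof (intro allI impI)
  fix U assume "openin (top_of_set S) U"
  then have "open U"
    using assms by (rule openin_open_trans)
  then show "openin euclidean ((\<lambda>y. a + y) ` U)"
    by (simp add: open_translation)
qed

lemma Yex_sum_surjective: "(\<lambda>(n, y). real_of_int n + y) ` (UNIV \<times> Yex) = UNIV"
proof -
  have "t \<in> (\<lambda>(n, y). real_of_int n + y) ` (UNIV \<times> Yex)" for t
  proof -
    have "(\<lceil>t\<rceil> - 1, t - real_of_int (\<lceil>t\<rceil> - 1)) \<in> UNIV \<times> Yex"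
      by (simp add: Yex_def) linarith
    then show ?thesis
      by (rule rev_image_eqI) simp
  qed
  then show ?thesis
    by blast
qed

theorem proposition3p12:
  shows "\<exists>f. homeomorphic_map (env_space (subtopology euclideanreal Yex) Yex_dom thex) euclideanreal f \<and>
     (\<forall>k x. x \<in> topspace (env_space (subtopology euclideanreal Yex) Yex_dom thex) \<longrightarrow>
        f (env_act k x) = real_of_int k + f x)"
proof -
  let ?X = "prod_topology (discrete_topology UNIV) (subtopology euclideanreal Yex)"
  have open_sum: "open_map ?X euclideanreal (\<lambda>(n, y). real_of_int n + y)"
    by (rule open_map_prod_discrete_topology) (simp add: open_map_translation_open_subtopology Yex_def)
  obtain f where homeo: "homeomorphic_map (quotient_topology ?X (env_class Yex_dom thex)) euclideanreal f"
    and f_class: "\<And>n y. (n, y) \<in> topspace ?X \<Longrightarrow> f (env_class Yex_dom thex (n, y)) = real_of_int n + y"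
  proof (rule homeomorphic_map_quotient_topologyE[where p = "env_class Yex_dom thex",
        OF continuous_map_of_int_add open_sum])
    show "(\<lambda>(n, y). real_of_int n + y) ` topspace ?X = topspace euclideanreal"
      using Yex_sum_surjective by simp
    show "env_class Yex_dom thex x = env_class Yex_dom thex x' \<longleftrightarrow>
        (\<lambda>(n, y). real_of_int n + y) x = (\<lambda>(n, y). real_of_int n + y) x'"
      if "x \<in> topspace ?X" and "x' \<in> topspace ?X" for x x'
      using that by (cases x; cases x') (simp add: Yex_def env_class_Yex_eq_iff)
  qed (simp add: Yex_def)
  have "f (env_act k x) = real_of_int k + f x"
    if "x \<in> topspace (env_space (subtopology euclideanreal Yex) Yex_dom thex)" for k x
  proof -
    from that obtain n y where "(n, y) \<in> topspace ?X" and "x = env_class Yex_dom thex (n, y)"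
      by (auto simp: topspace_env_space)
    then show ?thesis
      by (simp add: env_act_env_class f_class)
  qed
  with homeo show ?thesis
    unfolding env_space_def by blast
qed

end
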